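(* Let $G$ be a graph with a partition $V(G)=A\cup B$ of its vertices such that every vertex of $G$ has at most $\Delta(G)/100$ neighbours in $B$, and $A$ is an independent set. Then the edges of $G$ can be decomposed into $\lceil \Delta(G)/2\rceil$ linear forests.
   Context: $\Delta(G)$ is the maximum degree of $G$. A linear forest is a vertex-disjoint union of paths. A decomposition of the edges into linear forests means edge-disjoint linear forests whose union is $E(G)$. *)

theory Defs
  imports Complex_Main
begin

definition simple_graph :: "'a set \<Rightarrow> 'a set set \<Rightarrow> bool" where
  "simple_graph V E \<longleftrightarrow> finite V \<and>
     (\<forall>e\<in>E. \<exists>u v. e = {u, v} \<and> u \<noteq> v \<and> u \<in> V \<and> v \<in> V)"

definition degree :: "'a set set \<Rightarrow> 'a \<Rightarrow> nat" where
  "degree E v = card {e \<in> E. v \<in> e}"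

definition max_degree :: "'a set \<Rightarrow> 'a set set \<Rightarrow> nat" where
  "max_degree V E = Max (insert 0 (degree E ` V))"

definition nbrs_in :: "'a set set \<Rightarrow> 'a set \<Rightarrow> 'a \<Rightarrow> 'a set" where
  "nbrs_in E S v = {u \<in> S. {u, v} \<in> E}"

definition independent_set :: "'a set set \<Rightarrow> 'a set \<Rightarrow> bool" where
  "independent_set E S \<longleftrightarrow> (\<forall>u\<in>S. \<forall>v\<in>S. {u, v} \<notin> E)"

definition path_edges :: "'a list \<Rightarrow> 'a set set" where
  "path_edges xs = {{xs ! i, xs ! Suc i} | i. Suc i < length xs}"

definition linear_forest :: "'a set set \<Rightarrow> bool" where
  "linear_forest F \<longleftrightarrow> (\<exists>Ps. finite Ps \<and> (\<forall>p\<in>Ps. distinct p) \<and>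
      (\<forall>p\<in>Ps. \<forall>q\<in>Ps. p \<noteq> q \<longrightarrow> set p \<inter> set q = {}) \<and>
      F = (\<Union>p\<in>Ps. path_edges p))"

definition lf_decomposable :: "'a set set \<Rightarrow> nat \<Rightarrow> bool" where
  "lf_decomposable E k \<longleftrightarrow> (\<exists>c :: 'a set \<Rightarrow> nat. (\<forall>e\<in>E. c e < k) \<and>
      (\<forall>i<k. linear_forest {e \<in> E. c e = i}))"

end

(* Let k = ceil (Delta / 2) and s = floor (Delta / 100), so every vertex has at most s neighbours
   in B and 3 s <= k.  The edges inside B are coloured greedily with 2 s colours, each colour class
   being a matching.  Every b in B is split into two copies: the first takes
   min (|N_A(b)|, k - |N_B(b)|) of the A-neighbours of b and must avoid the colours already used at b
   inside B, the second takes the remaining A-neighbours, of which there are at most k because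
   deg b <= 2 k.  In the resulting bipartite graph between the copies and A every list is at least as
   long as the degree of its copy, and all lists share the colours 2 s, ..., k - 1, which outnumber the
   degrees in A; a Kempe-chain argument colours it properly from the lists.  In every one of the k
   colour classes the vertices of A have degree at most 1 and the vertices of B have at most one
   neighbour in B and degree at most 2, so each component is a path with at most two vertices in B. *)

theory Submission
  imports Defs "HOL-Combinatorics.Transposition"
begin

section \<open>Neighbourhoods in simple graphs\<close>

definition nbrs :: "'a set set \<Rightarrow> 'a \<Rightarrow> 'a set" where
  "nbrs E v = {u. {u, v} \<in> E}"

lemma nbrs_in_eq_nbrs_Int: "nbrs_in E S v = nbrs E v \<inter> S"
  by (auto simp: nbrs_in_def nbrs_def)

lemma nbrs_mono: "F \<subseteq> E \<Longrightarrow> nbrs F v \<subseteq> nbrs E v"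
  by (auto simp: nbrs_def)

lemma mem_nbrs_commute: "u \<in> nbrs E v \<longleftrightarrow> v \<in> nbrs E u"
  by (simp add: nbrs_def insert_commute)

lemma simple_graph_subset: "simple_graph V E \<Longrightarrow> F \<subseteq> E \<Longrightarrow> simple_graph V F"
  by (auto simp: simple_graph_def)

lemma simple_graph_finite_edges:
  assumes "simple_graph V E" shows "finite E"
proof (rule finite_subset)
  show "E \<subseteq> Pow V" using assms by (auto simp: simple_graph_def)
  show "finite (Pow V)" using assms by (simp add: simple_graph_def)
qed

lemma simple_graph_edgeE:
  assumes "simple_graph V E" "e \<in> E"
  obtains u v where "e = {u, v}" "u \<noteq> v" "u \<in> V" "v \<in> V"
  using assms by (auto simp: simple_graph_def)

lemma simple_graph_edge_other_end:
  assumes "simple_graph V E" "e \<in> E" "v \<in> e"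
  obtains u where "e = {u, v}" "u \<in> nbrs E v"
proof -
  obtain x y where xy: "e = {x, y}" using simple_graph_edgeE[OF assms(1,2)] by metis
  show ?thesis
  proof (cases "v = x")
    case True
    then have "e = {y, v}" using xy by blast
    then show ?thesis using that assms(2) by (simp add: nbrs_def)
  next
    case False
    then have "e = {x, v}" using xy assms(3) by blast
    then show ?thesis using that assms(2) by (simp add: nbrs_def)
  qed
qed

lemma simple_graph_nbrs_subset:
  assumes "simple_graph V E" shows "nbrs E v \<subseteq> V"
proof
  fix u assume "u \<in> nbrs E v"
  then have "{u, v} \<in> E" by (simp add: nbrs_def)
  then obtain x y where "{u, v} = {x, y}" "x \<in> V" "y \<in> V"
    by (rule simple_graph_edgeE[OF assms])
  then show "u \<in> V" by (auto simp: doubleton_eq_iff)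
qed

lemma simple_graph_nbrs_eq_empty:
  assumes "simple_graph V E" "v \<notin> V" shows "nbrs E v = {}"
proof -
  have "u \<notin> nbrs E v" for u
    using simple_graph_nbrs_subset[OF assms(1), of u] assms(2) mem_nbrs_commute[of u E v] by blast
  then show ?thesis by blast
qed

lemma simple_graph_finite_nbrs: "simple_graph V E \<Longrightarrow> finite (nbrs E v)"
  by (meson finite_subset simple_graph_def simple_graph_nbrs_subset)

lemma simple_graph_not_self_nbr:
  assumes "simple_graph V E" shows "v \<notin> nbrs E v"
proof
  assume "v \<in> nbrs E v"
  then have "{v} \<in> E" by (simp add: nbrs_def)
  then obtain x y where "{v} = {x, y}" "x \<noteq> y"
    by (rule simple_graph_edgeE[OF assms])
  then show False by (auto simp: doubleton_eq_iff)
qed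

lemma simple_graph_edges_at:
  assumes "simple_graph V E" shows "{e \<in> E. v \<in> e} = (\<lambda>u. {u, v}) ` nbrs E v"
proof
  show "{e \<in> E. v \<in> e} \<subseteq> (\<lambda>u. {u, v}) ` nbrs E v"
  proof
    fix e assume "e \<in> {e \<in> E. v \<in> e}"
    then have "e \<in> E" "v \<in> e" by auto
    then obtain u where "e = {u, v}" "u \<in> nbrs E v" by (rule simple_graph_edge_other_end[OF assms])
    then show "e \<in> (\<lambda>u. {u, v}) ` nbrs E v" by (rule image_eqI)
  qed
qed (auto simp: nbrs_def)

lemma simple_graph_degree_eq_card_nbrs:
  assumes "simple_graph V E" shows "degree E v = card (nbrs E v)"
proof -
  have "inj_on (\<lambda>u. {u, v}) (nbrs E v)" by (auto simp: inj_on_def doubleton_eq_iff)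
  then show ?thesis by (simp add: degree_def simple_graph_edges_at[OF assms] card_image)
qed

lemma degree_le_max_degree: "finite V \<Longrightarrow> v \<in> V \<Longrightarrow> degree E v \<le> max_degree V E"
  by (simp add: max_degree_def)

lemma card_image_edges_at_le_card_nbrs:
  assumes "simple_graph V E"
  shows "card (c ` {e \<in> E. v \<in> e}) \<le> card (nbrs E v)"
proof -
  have "card (c ` {e \<in> E. v \<in> e}) \<le> card {e \<in> E. v \<in> e}"
    using simple_graph_finite_edges[OF assms] by (intro card_image_le) simp
  then show ?thesis using simple_graph_degree_eq_card_nbrs[OF assms] by (simp add: degree_def)
qed

lemma card_le_1I: "finite S \<Longrightarrow> (\<And>x y. x \<in> S \<Longrightarrow> y \<in> S \<Longrightarrow> x = y) \<Longrightarrow> card S \<le> 1"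
  by (simp add: card_le_Suc0_iff_eq)

section \<open>Greedy colouring\<close>

lemma ex_not_in_image_if_card_less:
  assumes "finite S" "card S < card U"
  shows "\<exists>u\<in>U. \<forall>s\<in>S. f s \<noteq> u"
proof (rule ccontr)
  assume "\<not> ?thesis"
  then have "card U \<le> card (f ` S)" using assms(1) by (intro card_mono) auto
  also have "\<dots> \<le> card S" by (rule card_image_le[OF assms(1)])
  finally show False using assms(2) by simp
qed

lemma greedy_colouring:
  assumes "finite X" "\<And>x y. conflict x y \<Longrightarrow> conflict y x"
    and "\<forall>x\<in>X. card {y \<in> X. y \<noteq> x \<and> conflict x y} < m"
  shows "\<exists>c. (\<forall>x\<in>X. c x < m) \<and> (\<forall>x\<in>X. \<forall>y\<in>X. x \<noteq> y \<and> conflict x y \<longrightarrow> c x \<noteq> c y)"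
  using assms(1,3)
proof (induction X rule: finite_induct)
  case empty then show ?case by simp
next
  case (insert x X)
  have "card {y \<in> X. y \<noteq> z \<and> conflict z y} < m" if "z \<in> X" for z
  proof -
    have "card {y \<in> X. y \<noteq> z \<and> conflict z y} \<le> card {y \<in> insert x X. y \<noteq> z \<and> conflict z y}"
      by (rule card_mono) (use insert.hyps(1) in auto)
    then show ?thesis using insert.prems that by fastforce
  qed
  then obtain c where c_lt: "\<forall>y\<in>X. c y < m"
    and c_proper: "\<forall>y\<in>X. \<forall>z\<in>X. y \<noteq> z \<and> conflict y z \<longrightarrow> c y \<noteq> c z"
    using insert.IH by blast
  define S where "S = {y \<in> X. y \<noteq> x \<and> conflict x y}"
  have "card S \<le> card {y \<in> insert x X. y \<noteq> x \<and> conflict x y}"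
    unfolding S_def by (rule card_mono) (use insert.hyps(1) in auto)
  also have "\<dots> < card {..<m}" using insert.prems by simp
  finally obtain j where "j < m" "\<forall>y\<in>S. c y \<noteq> j"
    using ex_not_in_image_if_card_less[of S "{..<m}" c] insert.hyps(1) by (auto simp: S_def)
  then show ?case
    using c_lt c_proper insert.hyps(2) assms(2) by (intro exI[of _ "c(x := j)"]) (auto simp: S_def)
qed

lemma greedy_edge_colouring:
  assumes "simple_graph V F" "\<forall>v\<in>V. card (nbrs F v) \<le> s"
  shows "\<exists>c. (\<forall>e\<in>F. c e < 2 * s) \<and> (\<forall>e\<in>F. \<forall>f\<in>F. e \<noteq> f \<and> e \<inter> f \<noteq> {} \<longrightarrow> c e \<noteq> c f)"
proof (rule greedy_colouring)
  show "finite F" by (rule simple_graph_finite_edges[OF assms(1)])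
  show "e \<inter> f \<noteq> {} \<Longrightarrow> f \<inter> e \<noteq> {}" for e f :: "'a set" by blast
  show "\<forall>e\<in>F. card {f \<in> F. f \<noteq> e \<and> e \<inter> f \<noteq> {}} < 2 * s"
  proof
    fix e assume "e \<in> F"
    then obtain u v where e: "e = {u, v}" "u \<noteq> v" "u \<in> V" "v \<in> V"
      using simple_graph_edgeE[OF assms(1)] by metis
    define F\<^sub>u F\<^sub>v where "F\<^sub>u = {f \<in> F. u \<in> f}" and "F\<^sub>v = {f \<in> F. v \<in> f}"
    have fin: "finite F\<^sub>u" "finite F\<^sub>v"
      using simple_graph_finite_edges[OF assms(1)] by (simp_all add: F\<^sub>u_def F\<^sub>v_def)
    have "{f \<in> F. f \<noteq> e \<and> e \<inter> f \<noteq> {}} \<subseteq> (F\<^sub>u - {e}) \<union> (F\<^sub>v - {e})"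
    proof
      fix f assume f: "f \<in> {f \<in> F. f \<noteq> e \<and> e \<inter> f \<noteq> {}}"
      then obtain z where "z \<in> e" "z \<in> f" by blast
      with f e(1) show "f \<in> (F\<^sub>u - {e}) \<union> (F\<^sub>v - {e})" by (auto simp: F\<^sub>u_def F\<^sub>v_def)
    qed
    then have "card {f \<in> F. f \<noteq> e \<and> e \<inter> f \<noteq> {}} \<le> card ((F\<^sub>u - {e}) \<union> (F\<^sub>v - {e}))"
      using fin by (intro card_mono) auto
    also have "\<dots> \<le> card (F\<^sub>u - {e}) + card (F\<^sub>v - {e})" by (rule card_Un_le)
    also have "\<dots> = (degree F u - 1) + (degree F v - 1)"
      using \<open>e \<in> F\<close> e(1) fin by (simp add: degree_def F\<^sub>u_def F\<^sub>v_def)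
    also have "\<dots> < 2 * s"
    proof -
      have "e \<in> F\<^sub>u" "e \<in> F\<^sub>v" using \<open>e \<in> F\<close> e(1) by (simp_all add: F\<^sub>u_def F\<^sub>v_def)
      then have "degree F u > 0" "degree F v > 0"
        using fin by (auto simp: degree_def F\<^sub>u_def F\<^sub>v_def card_gt_0_iff)
      moreover have "degree F u \<le> s" "degree F v \<le> s"
        using assms(2) e(3,4) simple_graph_degree_eq_card_nbrs[OF assms(1)] by auto
      ultimately show ?thesis by linarith
    qed
    finally show "card {f \<in> F. f \<noteq> e \<and> e \<inter> f \<noteq> {}} < 2 * s" .
  qed
qed

section \<open>List edge colouring of bipartite graphs\<close>

(* A bipartite graph is a relation between left and right vertices; the colour of an edge must be
   taken from the list of its left end. *)
definition list_edge_colouring :: "('x \<times> 'y) set \<Rightarrow> ('x \<Rightarrow> 'c set) \<Rightarrow> ('x \<times> 'y \<Rightarrow> 'c) \<Rightarrow> bool" where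
  "list_edge_colouring F L c \<longleftrightarrow>
     (\<forall>(x, y)\<in>F. c (x, y) \<in> L x) \<and>
     (\<forall>x y y'. (x, y) \<in> F \<longrightarrow> (x, y') \<in> F \<longrightarrow> c (x, y) = c (x, y') \<longrightarrow> y = y') \<and>
     (\<forall>x x' y. (x, y) \<in> F \<longrightarrow> (x', y) \<in> F \<longrightarrow> c (x, y) = c (x', y) \<longrightarrow> x = x')"

lemma list_edge_colouring_insert:
  assumes "list_edge_colouring F L c" "\<alpha> \<in> L x\<^sub>0"
    and "\<forall>y. (x\<^sub>0, y) \<in> F \<longrightarrow> c (x\<^sub>0, y) \<noteq> \<alpha>" "\<forall>x. (x, y\<^sub>0) \<in> F \<longrightarrow> c (x, y\<^sub>0) \<noteq> \<alpha>"
  shows "list_edge_colouring (insert (x\<^sub>0, y\<^sub>0) F) L (c((x\<^sub>0, y\<^sub>0) := \<alpha>))"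
  unfolding list_edge_colouring_def
proof (intro conjI allI impI ballI)
  fix p assume "p \<in> insert (x\<^sub>0, y\<^sub>0) F"
  then show "case p of (x, y) \<Rightarrow> (c((x\<^sub>0, y\<^sub>0) := \<alpha>)) (x, y) \<in> L x"
    using assms(1,2) by (cases p) (auto simp: list_edge_colouring_def)
next
  fix x y y' assume "(x, y) \<in> insert (x\<^sub>0, y\<^sub>0) F" "(x, y') \<in> insert (x\<^sub>0, y\<^sub>0) F"
    "(c((x\<^sub>0, y\<^sub>0) := \<alpha>)) (x, y) = (c((x\<^sub>0, y\<^sub>0) := \<alpha>)) (x, y')"
  then show "y = y'" using assms(1,3) by (auto simp: list_edge_colouring_def split: if_splits)
next
  fix x x' y assume "(x, y) \<in> insert (x\<^sub>0, y\<^sub>0) F" "(x', y) \<in> insert (x\<^sub>0, y\<^sub>0) F"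
    "(c((x\<^sub>0, y\<^sub>0) := \<alpha>)) (x, y) = (c((x\<^sub>0, y\<^sub>0) := \<alpha>)) (x', y)"
  then show "x = x'" using assms(1,4) by (auto simp: list_edge_colouring_def split: if_splits)
qed

lemma list_edge_colouring_transpose:
  assumes c: "list_edge_colouring F L c"
    and closed: "\<And>x x' y. (x, y) \<in> F \<Longrightarrow> (x', y) \<in> F \<Longrightarrow> c (x, y) = \<alpha> \<Longrightarrow> c (x', y) = \<beta> \<Longrightarrow>
      x \<in> T \<longleftrightarrow> x' \<in> T"
    and lists: "\<And>x. x \<in> T \<Longrightarrow> \<alpha> \<in> L x \<and> \<beta> \<in> L x"
  shows "list_edge_colouring F L (\<lambda>p. if fst p \<in> T then transpose \<alpha> \<beta> (c p) else c p)"
    (is "list_edge_colouring F L ?c")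
  unfolding list_edge_colouring_def
proof (intro conjI allI impI ballI)
  fix p assume "p \<in> F"
  then show "case p of (x, y) \<Rightarrow> ?c (x, y) \<in> L x"
    using c lists by (cases p) (auto simp: list_edge_colouring_def transpose_def)
next
  fix x y y' assume "(x, y) \<in> F" "(x, y') \<in> F" "?c (x, y) = ?c (x, y')"
  then show "y = y'" using c by (cases "x \<in> T") (auto simp: list_edge_colouring_def dest: transpose_eq_imp_eq)
next
  fix x x' y assume xy: "(x, y) \<in> F" "(x', y) \<in> F" and eq: "?c (x, y) = ?c (x', y)"
  have side: "x \<in> T \<longleftrightarrow> x' \<in> T" if "c (x, y) \<noteq> c (x', y)"
    using closed[OF xy] closed[OF xy(2,1)] eq that
    by (auto simp: transpose_eq_iff split: if_splits)
  show "x = x'"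
  proof (cases "c (x, y) = c (x', y)")
    case False
    with side eq have "c (x, y) = c (x', y)" by (auto dest: transpose_eq_imp_eq split: if_splits)
    with False show ?thesis by contradiction
  qed (use c xy in \<open>auto simp: list_edge_colouring_def\<close>)
qed

(* T collects the left vertices reachable from x0 by alternately following an alpha-edge and a
   beta-edge.  Swapping alpha and beta at all vertices of T frees alpha at x0, and alpha stays free at
   y0 because a beta-edge from T to y0 would be preceded in the chain by an alpha-edge at y0. *)
lemma list_edge_colouring_kempe_swap:
  assumes c: "list_edge_colouring F L c"
    and \<alpha>: "\<forall>x. \<alpha> \<in> L x" and \<beta>: "\<beta> \<in> L x\<^sub>0"
    and \<beta>_free: "\<forall>y. (x\<^sub>0, y) \<in> F \<longrightarrow> c (x\<^sub>0, y) \<noteq> \<beta>"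
    and \<alpha>_free: "\<forall>x. (x, y\<^sub>0) \<in> F \<longrightarrow> c (x, y\<^sub>0) \<noteq> \<alpha>"
  shows "\<exists>c'. list_edge_colouring F L c' \<and>
    (\<forall>y. (x\<^sub>0, y) \<in> F \<longrightarrow> c' (x\<^sub>0, y) \<noteq> \<alpha>) \<and> (\<forall>x. (x, y\<^sub>0) \<in> F \<longrightarrow> c' (x, y\<^sub>0) \<noteq> \<alpha>)"
proof -
  define R where "R x x' \<longleftrightarrow> (\<exists>y. (x, y) \<in> F \<and> c (x, y) = \<alpha> \<and> (x', y) \<in> F \<and> c (x', y) = \<beta>)"
    for x x'
  define T where "T = {x. R\<^sup>*\<^sup>* x\<^sub>0 x}"
  define c' where "c' p = (if fst p \<in> T then transpose \<alpha> \<beta> (c p) else c p)" for p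
  have left_proper: "y = y'" if "(x, y) \<in> F" "(x, y') \<in> F" "c (x, y) = c (x, y')" for x y y'
    using c that by (auto simp: list_edge_colouring_def)
  have right_proper: "x = x'" if "(x, y) \<in> F" "(x', y) \<in> F" "c (x, y) = c (x', y)" for x x' y
    using c that by (auto simp: list_edge_colouring_def)
  have "x\<^sub>0 \<in> T" by (simp add: T_def)
  have pred: "\<exists>x'\<in>T. R x' x" if "x \<in> T" "x \<noteq> x\<^sub>0" for x
    using that by (auto simp: T_def elim: rtranclp.cases)
  have \<beta>_edge_pred: "\<exists>x'\<in>T. (x', y) \<in> F \<and> c (x', y) = \<alpha>"
    if "x \<in> T" "(x, y) \<in> F" "c (x, y) = \<beta>" for x y
  proof -
    have "x \<noteq> x\<^sub>0" using that \<beta>_free by auto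
    then obtain x' y' where "x' \<in> T" "(x', y') \<in> F" "c (x', y') = \<alpha>" "(x, y') \<in> F" "c (x, y') = \<beta>"
      using pred \<open>x \<in> T\<close> unfolding R_def by blast
    with that left_proper[of x y y'] show ?thesis by auto
  qed
  have closed: "x \<in> T \<longleftrightarrow> x' \<in> T"
    if edges: "(x, y) \<in> F" "(x', y) \<in> F" "c (x, y) = \<alpha>" "c (x', y) = \<beta>" for x x' y
  proof
    assume "x \<in> T"
    moreover have "R x x'" using edges by (auto simp: R_def)
    ultimately show "x' \<in> T" by (auto simp: T_def)
  next
    assume "x' \<in> T"
    then obtain x'' where "x'' \<in> T" "(x'', y) \<in> F" "c (x'', y) = \<alpha>"
      using \<beta>_edge_pred edges by blast
    with edges right_proper[of x y x''] show "x \<in> T" by auto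
  qed
  have lists: "\<alpha> \<in> L x \<and> \<beta> \<in> L x" if x: "x \<in> T" for x
  proof (cases "x = x\<^sub>0")
    case False
    then obtain y where "(x, y) \<in> F" "c (x, y) = \<beta>" using pred[OF x] by (auto simp: R_def)
    then show ?thesis using \<alpha> c by (auto simp: list_edge_colouring_def)
  qed (use \<alpha> \<beta> in auto)
  have "list_edge_colouring F L c'"
    unfolding c'_def by (rule list_edge_colouring_transpose[OF c closed lists])
  moreover have "c' (x\<^sub>0, y) \<noteq> \<alpha>" if "(x\<^sub>0, y) \<in> F" for y
    using \<beta>_free that \<open>x\<^sub>0 \<in> T\<close> by (auto simp: c'_def transpose_eq_iff)
  moreover have "c' (x, y\<^sub>0) \<noteq> \<alpha>" if "(x, y\<^sub>0) \<in> F" for x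
    using \<alpha>_free that \<beta>_edge_pred[of x y\<^sub>0] by (auto simp: c'_def transpose_eq_iff)
  ultimately show ?thesis by blast
qed

theorem bipartite_list_edge_colouring:
  assumes "finite F" "finite N" "\<forall>x. N \<subseteq> L x" "\<forall>x. finite (L x)"
    and "\<forall>x. card {y. (x, y) \<in> F} \<le> card (L x)"
    and "\<forall>y. card {x. (x, y) \<in> F} \<le> card N"
  shows "\<exists>c. list_edge_colouring F L c"
  using assms(1,5,6)
proof (induction F rule: finite_induct)
  case empty then show ?case by (auto simp: list_edge_colouring_def)
next
  case (insert e F)
  obtain x\<^sub>0 y\<^sub>0 where e: "e = (x\<^sub>0, y\<^sub>0)" by fastforce
  have fin_left: "finite {y. (x, y) \<in> F}" for x
    by (rule finite_subset[OF _ finite_imageI[OF insert.hyps(1), of snd]]) force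
  have fin_right: "finite {x. (x, y) \<in> F}" for y
    by (rule finite_subset[OF _ finite_imageI[OF insert.hyps(1), of fst]]) force
  have "card {y. (x, y) \<in> F} \<le> card {y. (x, y) \<in> insert e F}" for x
    using fin_left[of x] e by (intro card_mono) auto
  moreover have "card {x. (x, y) \<in> F} \<le> card {x. (x, y) \<in> insert e F}" for y
    using fin_right[of y] e by (intro card_mono) auto
  ultimately obtain c where c: "list_edge_colouring F L c"
    using insert.IH insert.prems by (meson order_trans)
  have "{y. (x\<^sub>0, y) \<in> insert e F} = insert y\<^sub>0 {y. (x\<^sub>0, y) \<in> F}"
    "{x. (x, y\<^sub>0) \<in> insert e F} = insert x\<^sub>0 {x. (x, y\<^sub>0) \<in> F}" using e by auto
  moreover have "y\<^sub>0 \<notin> {y. (x\<^sub>0, y) \<in> F}" "x\<^sub>0 \<notin> {x. (x, y\<^sub>0) \<in> F}"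
    using insert.hyps(2) e by auto
  ultimately have "Suc (card {y. (x\<^sub>0, y) \<in> F}) \<le> card (L x\<^sub>0)"
    "Suc (card {x. (x, y\<^sub>0) \<in> F}) \<le> card N"
    using insert.prems fin_left fin_right by (metis card_insert_disjoint)+
  then have "card {y. (x\<^sub>0, y) \<in> F} < card (L x\<^sub>0)" "card {x. (x, y\<^sub>0) \<in> F} < card N"
    by simp_all
  then obtain \<beta> \<alpha> where \<beta>: "\<beta> \<in> L x\<^sub>0" "\<forall>y\<in>{y. (x\<^sub>0, y) \<in> F}. c (x\<^sub>0, y) \<noteq> \<beta>"
    and \<alpha>: "\<alpha> \<in> N" "\<forall>x\<in>{x. (x, y\<^sub>0) \<in> F}. c (x, y\<^sub>0) \<noteq> \<alpha>"
    using ex_not_in_image_if_card_less[OF fin_left, where f = "\<lambda>y. c (x\<^sub>0, y)"]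
      ex_not_in_image_if_card_less[OF fin_right, where f = "\<lambda>x. c (x, y\<^sub>0)"]
    by blast
  have "\<forall>x. \<alpha> \<in> L x" using \<alpha>(1) assms(3) by blast
  with \<beta> \<alpha>(2) obtain c' where c': "list_edge_colouring F L c'"
    "\<forall>y. (x\<^sub>0, y) \<in> F \<longrightarrow> c' (x\<^sub>0, y) \<noteq> \<alpha>" "\<forall>x. (x, y\<^sub>0) \<in> F \<longrightarrow> c' (x, y\<^sub>0) \<noteq> \<alpha>"
    using list_edge_colouring_kempe_swap[OF c, of \<alpha> \<beta> x\<^sub>0 y\<^sub>0] by auto
  show ?case
    using list_edge_colouring_insert[OF c'(1) _ c'(2,3)] \<open>\<forall>x. \<alpha> \<in> L x\<close> e by blast
qed

section \<open>Linear forests\<close>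

lemma path_edges_singleton [simp]: "path_edges [x] = {}"
  by (simp add: path_edges_def)

lemma path_edges_Cons_Cons [simp]: "path_edges (x # y # zs) = insert {x, y} (path_edges (y # zs))"
proof -
  have "{i. Suc i < length (x # y # zs)} = insert 0 (Suc ` {i. Suc i < length (y # zs)})"
    by (auto simp: image_iff less_Suc_eq_0_disj)
  then show ?thesis unfolding path_edges_def by (simp add: setcompr_eq_image image_image)
qed

lemma linear_forestI:
  assumes "finite I" "\<forall>i\<in>I. distinct (p i)"
    and "\<forall>i\<in>I. \<forall>j\<in>I. i \<noteq> j \<longrightarrow> set (p i) \<inter> set (p j) = {}"
  shows "linear_forest (\<Union>i\<in>I. path_edges (p i))"
  unfolding linear_forest_def
proof (intro exI[of _ "p ` I"] conjI)
  show "\<forall>q\<in>p ` I. \<forall>q'\<in>p ` I. q \<noteq> q' \<longrightarrow> set q \<inter> set q' = {}"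
  proof (intro ballI impI)
    fix q q' assume "q \<in> p ` I" "q' \<in> p ` I" "q \<noteq> q'"
    then obtain i j where "i \<in> I" "j \<in> I" "i \<noteq> j" "q = p i" "q' = p j" by blast
    with assms(3) show "set q \<inter> set q' = {}" by blast
  qed
qed (use assms(1,2) in auto)

lemma card_le_2_cases:
  assumes "finite S" "card S \<le> 2"
  obtains "S = {}" | x where "S = {x}" | x y where "x \<noteq> y" "S = {x, y}"
  using assms by (metis card_2_iff card_1_singleton_iff card_0_eq le_Suc_eq numeral_2_eq_2 One_nat_def
      le_zero_eq)

lemma path_of_star:
  assumes "finite S" "card S \<le> 2" "b \<notin> S"
  shows "\<exists>p. distinct p \<and> set p = insert b S \<and> path_edges p = (\<lambda>x. {x, b}) ` S"
  using assms(1,2)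
proof (cases rule: card_le_2_cases)
  case 1 then show ?thesis by (intro exI[of _ "[b]"]) simp
next
  case (2 x) then show ?thesis using assms(3) by (intro exI[of _ "[x, b]"]) (simp add: insert_commute)
next
  case (3 x y) then show ?thesis using assms(3) by (intro exI[of _ "[x, b, y]"]) (auto simp: insert_commute)
qed

lemma path_of_double_star:
  assumes "finite S\<^sub>u" "card S\<^sub>u \<le> 1" "finite S\<^sub>v" "card S\<^sub>v \<le> 1"
    and "u \<noteq> v" "S\<^sub>u \<inter> S\<^sub>v = {}" "u \<notin> S\<^sub>u \<union> S\<^sub>v" "v \<notin> S\<^sub>u \<union> S\<^sub>v"
  shows "\<exists>p. distinct p \<and> set p = {u, v} \<union> S\<^sub>u \<union> S\<^sub>v \<and>
    path_edges p = insert {u, v} ((\<lambda>x. {x, u}) ` S\<^sub>u \<union> (\<lambda>x. {x, v}) ` S\<^sub>v)"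
proof -
  obtain xs where xs: "set xs = S\<^sub>u" "length xs \<le> 1"
    using assms(1,2) by (metis distinct_card finite_distinct_list)
  obtain ys where ys: "set ys = S\<^sub>v" "length ys \<le> 1"
    using assms(3,4) by (metis distinct_card finite_distinct_list)
  have "distinct (xs @ u # v # ys) \<and> set (xs @ u # v # ys) = {u, v} \<union> S\<^sub>u \<union> S\<^sub>v \<and>
    path_edges (xs @ u # v # ys) = insert {u, v} ((\<lambda>x. {x, u}) ` S\<^sub>u \<union> (\<lambda>x. {x, v}) ` S\<^sub>v)"
    using xs ys assms(5-8)
    by (cases xs; cases ys) (auto simp: le_Suc_eq insert_commute)
  then show ?thesis by blast
qed

locale independent_part_graph =
  fixes A B :: "'a set" and E :: "'a set set"
  assumes simple: "simple_graph (A \<union> B) E"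
    and disjoint: "A \<inter> B = {}"
    and independent: "independent_set E A"
begin

lemma finite_nbrs: "finite (nbrs E v)"
  by (rule simple_graph_finite_nbrs[OF simple])

lemma nbrs_subset: "nbrs E v \<subseteq> A \<union> B"
  by (rule simple_graph_nbrs_subset[OF simple])

lemma nbrs_split: "nbrs E v = (nbrs E v \<inter> A) \<union> (nbrs E v \<inter> B)"
  using nbrs_subset by blast

lemma card_nbrs_split: "card (nbrs E v) = card (nbrs E v \<inter> A) + card (nbrs E v \<inter> B)"
proof -
  have "card (nbrs E v) = card ((nbrs E v \<inter> A) \<union> (nbrs E v \<inter> B))"
    using nbrs_split by (rule arg_cong)
  also have "\<dots> = card (nbrs E v \<inter> A) + card (nbrs E v \<inter> B)"
    using finite_nbrs disjoint by (intro card_Un_disjoint) auto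
  finally show ?thesis .
qed

lemma nbrs_A_subset: "a \<in> A \<Longrightarrow> nbrs E a \<subseteq> B"
  using nbrs_subset independent by (auto simp: independent_set_def nbrs_def)

lemma edge_not_in_BE:
  assumes "e \<in> E" "\<not> e \<subseteq> B" obtains a b where "a \<in> A" "b \<in> B" "e = {a, b}"
proof -
  obtain x y where e: "e = {x, y}" "x \<in> A \<union> B" "y \<in> A \<union> B"
    using simple_graph_edgeE[OF simple assms(1)] by metis
  moreover have "\<not> (x \<in> A \<and> y \<in> A)"
    using independent assms(1) e(1) unfolding independent_set_def by blast
  ultimately show ?thesis using that assms(2) by (metis Un_iff empty_subsetI insert_commute insert_subset)
qed

lemma edge_meets_B:
  assumes "e \<in> E" obtains b where "b \<in> e" "b \<in> B"
proof (cases "e \<subseteq> B")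
  case True
  then show ?thesis using that simple_graph_edgeE[OF simple assms] by (metis insertCI subsetD)
next
  case False
  then show ?thesis using that edge_not_in_BE[OF assms] by blast
qed

end

locale matching_with_pendants = independent_part_graph A B F for A B :: "'a set" and F :: "'a set set" +
  assumes degree_A: "\<forall>a\<in>A. card (nbrs F a) \<le> 1"
    and degree_B_in_B: "\<forall>b\<in>B. card (nbrs F b \<inter> B) \<le> 1"
    and degree_B: "\<forall>b\<in>B. card (nbrs F b) \<le> 2"
begin

(* Each component of F is a path through a centre, i.e. a vertex of B without neighbours in B or an
   edge inside B, together with the A-neighbours of the centre. *)
definition centres :: "'a set set" where
  "centres = {{b} | b. b \<in> B \<and> nbrs F b \<inter> B = {}} \<union> {e \<in> F. e \<subseteq> B}"

lemma nbrs_A_unique: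
  assumes "a \<in> A" "b \<in> nbrs F a" "b' \<in> nbrs F a" shows "b = b'"
proof -
  have "card (nbrs F a) \<le> Suc 0" using degree_A assms(1) by simp
  with assms(2,3) show ?thesis by (simp add: card_le_Suc0_iff_eq[OF finite_nbrs])
qed

lemma nbrs_B_in_B_unique:
  assumes "b \<in> B" "w \<in> nbrs F b \<inter> B" shows "nbrs F b \<inter> B = {w}"
proof -
  have "card (nbrs F b \<inter> B) \<le> Suc 0" using degree_B_in_B assms(1) by simp
  with assms(2) show ?thesis using finite_nbrs by (auto simp: card_le_Suc0_iff_eq)
qed

lemma finite_centres: "finite centres"
proof -
  have "centres \<subseteq> Pow (A \<union> B)"
    using simple by (auto simp: centres_def simple_graph_def)
  then show ?thesis using simple finite_subset by (auto simp: simple_graph_def)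
qed

lemma B_edge_unique_B_nbr:
  assumes "e \<in> F" "e \<subseteq> B" "z \<in> e" obtains w where "e = {w, z}" "nbrs F z \<inter> B = {w}"
proof -
  obtain w where e: "e = {w, z}" "w \<in> nbrs F z"
    using simple_graph_edge_other_end[OF simple assms(1,3)] .
  moreover have "z \<in> B" "w \<in> B" using assms(2) e(1) by auto
  ultimately have "nbrs F z \<inter> B = {w}" using nbrs_B_in_B_unique by blast
  with e(1) show ?thesis by (rule that)
qed

lemma centres_disjoint:
  assumes "C \<in> centres" "C' \<in> centres" "C \<noteq> C'" shows "C \<inter> C' = {}"
proof (rule ccontr)
  assume "C \<inter> C' \<noteq> {}"
  then obtain z where z: "z \<in> C" "z \<in> C'" by blast
  have singleton: "D = {z} \<and> nbrs F z \<inter> B = {}" if "D \<in> centres" "z \<in> D" "\<not> (D \<in> F \<and> D \<subseteq> B)" for D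
    using that by (auto simp: centres_def)
  have not_singleton: "nbrs F z \<inter> B \<noteq> {}" if "D \<in> F" "D \<subseteq> B" "z \<in> D" for D
    using B_edge_unique_B_nbr[OF that] by (metis empty_not_insert)
  show False
  proof (cases "C \<in> F \<and> C \<subseteq> B"; cases "C' \<in> F \<and> C' \<subseteq> B")
    assume "C \<in> F \<and> C \<subseteq> B" "C' \<in> F \<and> C' \<subseteq> B"
    then obtain w w' where "C = {w, z}" "C' = {w', z}" "nbrs F z \<inter> B = {w}" "nbrs F z \<inter> B = {w'}"
      using B_edge_unique_B_nbr z by metis
    then show False using assms(3) by simp
  next
    assume "C \<in> F \<and> C \<subseteq> B" "\<not> (C' \<in> F \<and> C' \<subseteq> B)"
    then show False using singleton[OF assms(2) z(2)] not_singleton z(1) by blast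
  next
    assume "\<not> (C \<in> F \<and> C \<subseteq> B)" "C' \<in> F \<and> C' \<subseteq> B"
    then show False using singleton[OF assms(1) z(1)] not_singleton z(2) by blast
  next
    assume "\<not> (C \<in> F \<and> C \<subseteq> B)" "\<not> (C' \<in> F \<and> C' \<subseteq> B)"
    then show False using singleton[OF assms(1) z(1)] singleton[OF assms(2) z(2)] assms(3) by simp
  qed
qed

lemma centre_path:
  assumes "C \<in> centres"
  shows "\<exists>p. distinct p \<and> set p = C \<union> (\<Union>b\<in>C. nbrs F b \<inter> A) \<and>
    path_edges p = {e \<in> F. e \<inter> C \<noteq> {}}"
proof -
  have edges_at: "{e \<in> F. e \<inter> C \<noteq> {}} = (\<Union>b\<in>C. (\<lambda>x. {x, b}) ` nbrs F b)"
    using simple_graph_edges_at[OF simple] by blast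
  show ?thesis
  proof (cases "C \<in> F \<and> C \<subseteq> B")
    case False
    then obtain b where b: "C = {b}" "b \<in> B" "nbrs F b \<inter> B = {}"
      using assms by (auto simp: centres_def)
    then have "nbrs F b \<inter> A = nbrs F b" using nbrs_split by blast
    moreover have "card (nbrs F b) \<le> 2" "b \<notin> nbrs F b"
      using degree_B b(2) simple_graph_not_self_nbr[OF simple] by auto
    ultimately show ?thesis
      using path_of_star[OF finite_nbrs] edges_at b(1) by simp
  next
    case True
    then obtain u v where uv: "C = {u, v}" "u \<noteq> v" "u \<in> B" "v \<in> B"
      using simple_graph_edgeE[OF simple] by (metis insert_subset)
    have "nbrs F u \<inter> B = {v}" "nbrs F v \<inter> B = {u}"
      using B_edge_unique_B_nbr[OF conjunct1[OF True] conjunct2[OF True]] uv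
      by (metis doubleton_eq_iff insertCI)+
    then have nbrs_uv: "nbrs F u = insert v (nbrs F u \<inter> A)" "nbrs F v = insert u (nbrs F v \<inter> A)"
      using nbrs_split by blast+
    have "v \<notin> nbrs F u \<inter> A" "u \<notin> nbrs F v \<inter> A" using uv disjoint by auto
    then have "card (nbrs F u \<inter> A) \<le> 1" "card (nbrs F v \<inter> A) \<le> 1"
      using degree_B uv(3,4) nbrs_uv finite_nbrs
      by (metis card_insert_disjoint finite_Int Suc_1 Suc_le_mono)+
    moreover have "(nbrs F u \<inter> A) \<inter> (nbrs F v \<inter> A) = {}"
      using nbrs_A_unique uv(2) by (auto simp: mem_nbrs_commute)
    moreover have "u \<notin> (nbrs F u \<inter> A) \<union> (nbrs F v \<inter> A)" "v \<notin> (nbrs F u \<inter> A) \<union> (nbrs F v \<inter> A)"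
      using uv disjoint by auto
    ultimately obtain p where "distinct p" "set p = {u, v} \<union> (nbrs F u \<inter> A) \<union> (nbrs F v \<inter> A)"
      "path_edges p = insert {u, v} ((\<lambda>x. {x, u}) ` (nbrs F u \<inter> A) \<union> (\<lambda>x. {x, v}) ` (nbrs F v \<inter> A))"
      using path_of_double_star[of "nbrs F u \<inter> A" "nbrs F v \<inter> A" u v] finite_nbrs uv(2) by blast
    moreover have "(\<Union>b\<in>C. (\<lambda>x. {x, b}) ` nbrs F b) =
        insert {u, v} ((\<lambda>x. {x, u}) ` (nbrs F u \<inter> A) \<union> (\<lambda>x. {x, v}) ` (nbrs F v \<inter> A))"
      using uv(1) nbrs_uv by (auto simp: insert_commute)
    ultimately show ?thesis using edges_at uv(1) by auto
  qed
qed

lemma edge_meets_centre: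
  assumes "e \<in> F" shows "\<exists>C\<in>centres. e \<inter> C \<noteq> {}"
proof -
  obtain b where b: "b \<in> e" "b \<in> B" using edge_meets_B[OF assms] .
  show ?thesis
  proof (cases "nbrs F b \<inter> B = {}")
    case True
    then have "{b} \<in> centres" using b(2) unfolding centres_def by blast
    moreover have "e \<inter> {b} \<noteq> {}" using b(1) by simp
    ultimately show ?thesis by (rule bexI[rotated])
  next
    case False
    then obtain w where "w \<in> nbrs F b \<inter> B" by blast
    then have "{w, b} \<in> centres" using b(2) unfolding centres_def nbrs_def by simp
    moreover have "e \<inter> {w, b} \<noteq> {}" using b(1) by simp
    ultimately show ?thesis by (rule bexI[rotated])
  qed
qed

theorem linear_forest: "linear_forest F"
proof -
  define p where "p C = (SOME p. distinct p \<and> set p = C \<union> (\<Union>b\<in>C. nbrs F b \<inter> A) \<and>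
    path_edges p = {e \<in> F. e \<inter> C \<noteq> {}})" for C
  have p: "distinct (p C) \<and> set (p C) = C \<union> (\<Union>b\<in>C. nbrs F b \<inter> A) \<and>
    path_edges (p C) = {e \<in> F. e \<inter> C \<noteq> {}}" if "C \<in> centres" for C
    unfolding p_def by (rule someI_ex[OF centre_path[OF that]])
  have "set (p C) \<inter> set (p C') = {}" if C: "C \<in> centres" "C' \<in> centres" "C \<noteq> C'" for C C'
  proof (intro equalityI subsetI)
    fix z assume "z \<in> set (p C) \<inter> set (p C')"
    then have z: "z \<in> C \<union> (\<Union>b\<in>C. nbrs F b \<inter> A)" "z \<in> C' \<union> (\<Union>b\<in>C'. nbrs F b \<inter> A)"
      using p[OF C(1)] p[OF C(2)] by auto
    have "C \<subseteq> B" "C' \<subseteq> B" using C(1,2) by (auto simp: centres_def)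
    moreover have "C \<inter> C' = {}" by (rule centres_disjoint[OF C])
    moreover have "b = b'" if "z \<in> nbrs F b \<inter> A" "z \<in> nbrs F b' \<inter> A" for b b'
      using nbrs_A_unique[of z b b'] that by (simp add: mem_nbrs_commute)
    ultimately show "z \<in> {}" using z disjoint by blast
  qed simp
  then have "linear_forest (\<Union>C\<in>centres. path_edges (p C))"
    using finite_centres p by (intro linear_forestI) auto
  moreover have "(\<Union>C\<in>centres. path_edges (p C)) = F"
    using p edge_meets_centre by auto
  ultimately show ?thesis by simp
qed

end

locale sparse_bipartite = independent_part_graph +
  fixes s k :: nat
  assumes few_B_nbrs: "\<forall>v\<in>A \<union> B. card (nbrs E v \<inter> B) \<le> s"
    and degree_le: "\<forall>v\<in>A \<union> B. card (nbrs E v) \<le> 2 * k"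
    and s_le: "3 * s \<le> k"
begin

definition B_edges :: "'a set set" where
  "B_edges = {e \<in> E. e \<subseteq> B}"

lemma simple_graph_B_edges: "simple_graph (A \<union> B) B_edges"
  by (rule simple_graph_subset[OF simple]) (auto simp: B_edges_def)

lemma card_nbrs_B_edges: "card (nbrs B_edges v) \<le> card (nbrs E v \<inter> B)"
  using finite_nbrs by (intro card_mono) (auto simp: B_edges_def nbrs_def)

lemma B_edge_colouring_exists:
  "\<exists>c. (\<forall>e\<in>B_edges. c e < 2 * s) \<and>
    (\<forall>e\<in>B_edges. \<forall>f\<in>B_edges. e \<noteq> f \<and> e \<inter> f \<noteq> {} \<longrightarrow> c e \<noteq> c f)"
  using simple_graph_B_edges by (rule greedy_edge_colouring)
    (use few_B_nbrs card_nbrs_B_edges in \<open>meson le_trans\<close>)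

definition restricted_nbrs :: "'a \<Rightarrow> 'a set" where
  "restricted_nbrs b = (SOME S. S \<subseteq> nbrs E b \<inter> A \<and>
     card S = min (card (nbrs E b \<inter> A)) (k - card (nbrs E b \<inter> B)))"

lemma restricted_nbrs:
  "restricted_nbrs b \<subseteq> nbrs E b \<inter> A"
  "card (restricted_nbrs b) = min (card (nbrs E b \<inter> A)) (k - card (nbrs E b \<inter> B))"
proof -
  have "\<exists>S. S \<subseteq> nbrs E b \<inter> A \<and> card S = min (card (nbrs E b \<inter> A)) (k - card (nbrs E b \<inter> B))"
    by (rule obtain_subset_with_card_n[OF min.cobounded1]) blast
  from someI_ex[OF this] show "restricted_nbrs b \<subseteq> nbrs E b \<inter> A"
    "card (restricted_nbrs b) = min (card (nbrs E b \<inter> A)) (k - card (nbrs E b \<inter> B))"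
    unfolding restricted_nbrs_def by blast+
qed

lemma card_unrestricted_nbrs: "card (nbrs E b \<inter> A) - card (restricted_nbrs b) \<le> k"
proof (cases "b \<in> A \<union> B")
  case True
  have "card (nbrs E b) \<le> 2 * k" "card (nbrs E b \<inter> B) \<le> s"
    using degree_le few_B_nbrs True by blast+
  then have "card (nbrs E b \<inter> A) \<le> k + (k - card (nbrs E b \<inter> B))"
    using card_nbrs_split[of b] s_le by linarith
  then show ?thesis using restricted_nbrs(2)[of b] by (simp add: min_def le_diff_conv)
next
  case False
  then show ?thesis using simple_graph_nbrs_eq_empty[OF simple] by simp
qed

end

locale sparse_bipartite_B_coloured = sparse_bipartite +
  fixes c\<^sub>B :: "'a set \<Rightarrow> nat"
  assumes B_colour_range: "\<forall>e\<in>B_edges. c\<^sub>B e < 2 * s"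
    and B_colour_proper: "\<forall>e\<in>B_edges. \<forall>f\<in>B_edges. e \<noteq> f \<and> e \<inter> f \<noteq> {} \<longrightarrow> c\<^sub>B e \<noteq> c\<^sub>B f"
begin

definition B_colours_at :: "'a \<Rightarrow> nat set" where
  "B_colours_at b = c\<^sub>B ` {e \<in> B_edges. b \<in> e}"

(* The left vertices (b, True) and (b, False) are the two copies of b in B; the first one gets the
   A-neighbours in restricted_nbrs b and has to avoid the colours used at b inside B. *)
definition split_graph :: "(('a \<times> bool) \<times> 'a) set" where
  "split_graph = {((b, a \<in> restricted_nbrs b), a) | a b. a \<in> A \<and> b \<in> B \<and> {a, b} \<in> E}"

definition split_lists :: "'a \<times> bool \<Rightarrow> nat set" where
  "split_lists x = (if snd x then {..<k} - B_colours_at (fst x) else {..<k})"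

lemma mem_split_graph:
  "((b, j), a) \<in> split_graph \<longleftrightarrow> a \<in> A \<and> b \<in> B \<and> {a, b} \<in> E \<and> j = (a \<in> restricted_nbrs b)"
  by (auto simp: split_graph_def)

lemma B_colours_at_subset: "B_colours_at b \<subseteq> {..<2 * s}"
  using B_colour_range by (auto simp: B_colours_at_def)

lemma card_B_colours_at: "card (B_colours_at b) \<le> card (nbrs E b \<inter> B)"
  using card_image_edges_at_le_card_nbrs[OF simple_graph_B_edges] card_nbrs_B_edges
  unfolding B_colours_at_def by (rule le_trans)

lemma split_graph_left_degree: "card {a. (x, a) \<in> split_graph} \<le> card (split_lists x)"
proof -
  obtain b j where x: "x = (b, j)" by fastforce
  have fin: "finite (nbrs E b \<inter> A)" using finite_nbrs by simp
  then have fin_restricted: "finite (restricted_nbrs b)" using restricted_nbrs(1) finite_subset by blast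
  show ?thesis
  proof (cases j)
    case True
    have "card {a. (x, a) \<in> split_graph} \<le> card (restricted_nbrs b)"
      using x True fin_restricted by (intro card_mono) (auto simp: mem_split_graph)
    also have "\<dots> \<le> k - card (B_colours_at b)"
      using restricted_nbrs(2)[of b] card_B_colours_at[of b] by simp
    also have "\<dots> \<le> card ({..<k} - B_colours_at b)"
      using diff_card_le_card_Diff[of "B_colours_at b" "{..<k}"] B_colours_at_subset finite_subset
      by fastforce
    finally show ?thesis using x True by (simp add: split_lists_def)
  next
    case False
    have "card {a. (x, a) \<in> split_graph} \<le> card (nbrs E b \<inter> A - restricted_nbrs b)"
      using x False fin by (intro card_mono) (auto simp: mem_split_graph nbrs_def)
    also have "\<dots> = card (nbrs E b \<inter> A) - card (restricted_nbrs b)"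
      using restricted_nbrs(1) fin_restricted by (intro card_Diff_subset) auto
    also have "\<dots> \<le> k" by (rule card_unrestricted_nbrs)
    finally show ?thesis using x False by (simp add: split_lists_def)
  qed
qed

lemma split_graph_right_degree: "card {x. (x, a) \<in> split_graph} \<le> card {2 * s..<k}"
proof (cases "a \<in> A")
  case True
  have "{x. (x, a) \<in> split_graph} \<subseteq> (\<lambda>b. (b, a \<in> restricted_nbrs b)) ` (nbrs E a \<inter> B)"
    by (auto simp: mem_split_graph nbrs_def insert_commute)
  then have "card {x. (x, a) \<in> split_graph} \<le> card (nbrs E a \<inter> B)"
    using finite_nbrs by (meson card_image_le card_mono finite_Int finite_imageI le_trans)
  also have "\<dots> \<le> s" using few_B_nbrs True by simp
  finally show ?thesis using s_le by simp
next
  case False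
  then have "{x. (x, a) \<in> split_graph} = {}" by (auto simp: split_graph_def)
  then show ?thesis by (metis card.empty le0)
qed

lemma split_graph_colouring_exists: "\<exists>c. list_edge_colouring split_graph split_lists c"
proof (rule bipartite_list_edge_colouring)
  have "split_graph \<subseteq> (\<lambda>(b, a). ((b, a \<in> restricted_nbrs b), a)) ` (B \<times> A)"
    by (auto simp: split_graph_def)
  then show "finite split_graph"
    using simple by (auto simp: simple_graph_def intro: finite_subset)
  show "\<forall>x. {2 * s..<k} \<subseteq> split_lists x"
    using B_colours_at_subset by (fastforce simp: split_lists_def)
qed (use split_graph_left_degree split_graph_right_degree in \<open>auto simp: split_lists_def\<close>)

end

locale sparse_bipartite_coloured = sparse_bipartite_B_coloured +
  fixes c\<^sub>H :: "('a \<times> bool) \<times> 'a \<Rightarrow> nat"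
  assumes split_colouring: "list_edge_colouring split_graph split_lists c\<^sub>H"
begin

definition colour :: "'a set \<Rightarrow> nat" where
  "colour e = (if e \<subseteq> B then c\<^sub>B e else
     (let b = the_elem (e \<inter> B); a = the_elem (e - B) in c\<^sub>H ((b, a \<in> restricted_nbrs b), a)))"

lemma colour_AB: "a \<in> A \<Longrightarrow> b \<in> B \<Longrightarrow> colour {a, b} = c\<^sub>H ((b, a \<in> restricted_nbrs b), a)"
proof -
  assume "a \<in> A" "b \<in> B"
  then have "a \<notin> B" using disjoint by blast
  moreover have "{a, b} \<inter> B = {b}" "{a, b} - B = {a}" using \<open>a \<notin> B\<close> \<open>b \<in> B\<close> by auto
  ultimately show ?thesis by (simp add: colour_def)
qed

lemma split_colour_in_list: "((b, j), a) \<in> split_graph \<Longrightarrow> c\<^sub>H ((b, j), a) \<in> split_lists (b, j)"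
  using split_colouring by (auto simp: list_edge_colouring_def)

lemma split_colour_left_unique:
  "((b, j), a) \<in> split_graph \<Longrightarrow> ((b, j), a') \<in> split_graph \<Longrightarrow> c\<^sub>H ((b, j), a) = c\<^sub>H ((b, j), a') \<Longrightarrow> a = a'"
  using split_colouring by (auto simp: list_edge_colouring_def)

lemma split_colour_right_unique:
  "(x, a) \<in> split_graph \<Longrightarrow> (x', a) \<in> split_graph \<Longrightarrow> c\<^sub>H (x, a) = c\<^sub>H (x', a) \<Longrightarrow> x = x'"
  using split_colouring unfolding list_edge_colouring_def by blast

lemma colour_less: "e \<in> E \<Longrightarrow> colour e < k"
proof (cases "e \<subseteq> B")
  case True
  assume "e \<in> E"
  then have "c\<^sub>B e < 2 * s" using B_colour_range True by (simp add: B_edges_def)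
  then show ?thesis using True s_le by (simp add: colour_def)
next
  case False
  assume "e \<in> E"
  then obtain a b where ab: "a \<in> A" "b \<in> B" "e = {a, b}" using edge_not_in_BE False by metis
  then have "((b, a \<in> restricted_nbrs b), a) \<in> split_graph" using \<open>e \<in> E\<close> by (simp add: mem_split_graph)
  then have "c\<^sub>H ((b, a \<in> restricted_nbrs b), a) \<in> split_lists (b, a \<in> restricted_nbrs b)"
    by (rule split_colour_in_list)
  then show ?thesis using ab colour_AB by (auto simp: split_lists_def split: if_splits)
qed

context
  fixes i :: nat
begin

abbreviation colour_class :: "'a set set" where
  "colour_class \<equiv> {e \<in> E. colour e = i}"

lemma finite_colour_class_nbrs: "finite (nbrs colour_class v)"
  by (rule finite_subset[OF nbrs_mono finite_nbrs]) blast

lemma colour_class_AB: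
  "a \<in> A \<Longrightarrow> b \<in> B \<Longrightarrow> b \<in> nbrs colour_class a \<longleftrightarrow>
    ((b, a \<in> restricted_nbrs b), a) \<in> split_graph \<and> c\<^sub>H ((b, a \<in> restricted_nbrs b), a) = i"
proof -
  assume "a \<in> A" "b \<in> B"
  moreover have "{b, a} = {a, b}" by blast
  ultimately show ?thesis by (simp add: nbrs_def mem_split_graph colour_AB)
qed

lemma colour_class_degree_A: "a \<in> A \<Longrightarrow> card (nbrs colour_class a) \<le> 1"
proof (rule card_le_1I[OF finite_colour_class_nbrs])
  fix b b' assume "a \<in> A" "b \<in> nbrs colour_class a" "b' \<in> nbrs colour_class a"
  moreover from this have "b \<in> B" "b' \<in> B" using nbrs_A_subset nbrs_mono[of colour_class E] by blast+
  ultimately have "(b, a \<in> restricted_nbrs b) = (b', a \<in> restricted_nbrs b')"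
    using colour_class_AB by (intro split_colour_right_unique[of _ a]) auto
  then show "b = b'" by simp
qed

lemma colour_class_degree_B_in_B: "b \<in> B \<Longrightarrow> card (nbrs colour_class b \<inter> B) \<le> 1"
proof (rule card_le_1I)
  fix w w' assume "b \<in> B" "w \<in> nbrs colour_class b \<inter> B" "w' \<in> nbrs colour_class b \<inter> B"
  then have "{w, b} \<in> B_edges" "{w', b} \<in> B_edges" "c\<^sub>B {w, b} = c\<^sub>B {w', b}"
    by (auto simp: nbrs_def B_edges_def colour_def)
  moreover have "{w, b} \<inter> {w', b} \<noteq> {}" by simp
  ultimately have "{w, b} = {w', b}" using B_colour_proper[rule_format, of "{w, b}" "{w', b}"] by auto
  then show "w = w'" by (auto simp: doubleton_eq_iff)
qed (use finite_colour_class_nbrs in simp)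

lemma colour_class_degree_copy:
  assumes b: "b \<in> B" shows "card {a \<in> nbrs colour_class b \<inter> A. (a \<in> restricted_nbrs b) = j} \<le> 1"
proof (rule card_le_1I)
  fix a a' assume "a \<in> {a \<in> nbrs colour_class b \<inter> A. (a \<in> restricted_nbrs b) = j}"
    "a' \<in> {a \<in> nbrs colour_class b \<inter> A. (a \<in> restricted_nbrs b) = j}"
  then have "((b, j), a) \<in> split_graph" "((b, j), a') \<in> split_graph" "c\<^sub>H ((b, j), a) = c\<^sub>H ((b, j), a')"
    using colour_class_AB b by (auto simp: mem_nbrs_commute)
  then show "a = a'" by (rule split_colour_left_unique)
qed (use finite_colour_class_nbrs in simp)

lemma colour_class_B_nbr_excludes_restricted_nbr:
  assumes b: "b \<in> B" and w: "w \<in> nbrs colour_class b \<inter> B"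
    and a: "a \<in> nbrs colour_class b \<inter> restricted_nbrs b"
  shows False
proof -
  have "{w, b} \<in> B_edges" "i = c\<^sub>B {w, b}" using b w by (auto simp: nbrs_def B_edges_def colour_def)
  then have "i \<in> B_colours_at b" by (auto simp: B_colours_at_def intro!: image_eqI)
  moreover have "a \<in> A" using a restricted_nbrs(1) by blast
  then have "((b, True), a) \<in> split_graph" "c\<^sub>H ((b, True), a) = i"
    using a colour_class_AB b by (auto simp: mem_nbrs_commute)
  then have "i \<in> split_lists (b, True)" using split_colour_in_list by metis
  ultimately show False by (simp add: split_lists_def)
qed

lemma colour_class_degree_B:
  assumes b: "b \<in> B" shows "card (nbrs colour_class b) \<le> 2"
proof -
  define N where "N = nbrs colour_class b"
  define G where "G j = {a \<in> N \<inter> A. (a \<in> restricted_nbrs b) = j}" for j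
  have fin: "finite N" "finite (N \<inter> B)" "finite (G j)" for j
    using finite_colour_class_nbrs by (auto simp: N_def G_def)
  have "N \<subseteq> nbrs E b" unfolding N_def by (rule nbrs_mono) blast
  then have "N \<subseteq> (N \<inter> B) \<union> G True \<union> G False" using nbrs_subset by (auto simp: G_def)
  then have "card N \<le> card ((N \<inter> B) \<union> G True \<union> G False)" using fin by (intro card_mono) auto
  also have "\<dots> \<le> card ((N \<inter> B) \<union> G True) + card (G False)" by (rule card_Un_le)
  also have "\<dots> \<le> card (N \<inter> B) + card (G True) + card (G False)" using card_Un_le by simp
  finally have bound: "card N \<le> card (N \<inter> B) + card (G True) + card (G False)" .
  have copy: "card (G j) \<le> 1" for j unfolding G_def N_def by (rule colour_class_degree_copy[OF b])
  have "N \<inter> B = {} \<or> G True = {}"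
    using colour_class_B_nbr_excludes_restricted_nbr[OF b] by (auto simp: N_def G_def)
  moreover have "card (N \<inter> B) \<le> 1" unfolding N_def by (rule colour_class_degree_B_in_B[OF b])
  ultimately have "card (N \<inter> B) + card (G True) \<le> 1" using copy[of True] by auto
  then show ?thesis using bound copy[of False] unfolding N_def by linarith
qed

lemma colour_class_matching_with_pendants: "matching_with_pendants A B colour_class"
proof unfold_locales
  show "simple_graph (A \<union> B) colour_class" by (rule simple_graph_subset[OF simple]) blast
  show "independent_set colour_class A" using independent by (auto simp: independent_set_def)
  show "A \<inter> B = {}" by (rule disjoint)
  show "\<forall>a\<in>A. card (nbrs colour_class a) \<le> 1" using colour_class_degree_A by blast
  show "\<forall>b\<in>B. card (nbrs colour_class b \<inter> B) \<le> 1" using colour_class_degree_B_in_B by blast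
  show "\<forall>b\<in>B. card (nbrs colour_class b) \<le> 2" using colour_class_degree_B by blast
qed

end

lemma lf_decomposable_by_colour: "lf_decomposable E k"
  unfolding lf_decomposable_def
proof (intro exI[of _ colour] conjI ballI allI impI)
  show "colour e < k" if "e \<in> E" for e using that by (rule colour_less)
  show "linear_forest {e \<in> E. colour e = i}" for i
    by (rule matching_with_pendants.linear_forest[OF colour_class_matching_with_pendants])
qed

end

context sparse_bipartite
begin

theorem lf_decomposable: "lf_decomposable E k"
proof -
  obtain c\<^sub>B where "\<forall>e\<in>B_edges. c\<^sub>B e < 2 * s"
    "\<forall>e\<in>B_edges. \<forall>f\<in>B_edges. e \<noteq> f \<and> e \<inter> f \<noteq> {} \<longrightarrow> c\<^sub>B e \<noteq> c\<^sub>B f"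
    using B_edge_colouring_exists by blast
  then interpret sparse_bipartite_B_coloured A B E s k c\<^sub>B
    by (intro sparse_bipartite_B_coloured.intro sparse_bipartite_axioms sparse_bipartite_B_coloured_axioms.intro)
  obtain c\<^sub>H where "list_edge_colouring split_graph split_lists c\<^sub>H"
    using split_graph_colouring_exists by blast
  then interpret sparse_bipartite_coloured A B E s k c\<^sub>B c\<^sub>H
    by (intro sparse_bipartite_coloured.intro sparse_bipartite_B_coloured_axioms
        sparse_bipartite_coloured_axioms.intro)
  show ?thesis by (rule lf_decomposable_by_colour)
qed

end

lemma nat_ceiling_half:
  fixes d :: nat
  shows "d \<le> 2 * nat \<lceil>real d / 2\<rceil>" "3 * (d div 100) \<le> nat \<lceil>real d / 2\<rceil>"
proof -
  have "real d / 2 \<le> real (nat \<lceil>real d / 2\<rceil>)" by linarith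
  then show "d \<le> 2 * nat \<lceil>real d / 2\<rceil>" "3 * (d div 100) \<le> nat \<lceil>real d / 2\<rceil>" by linarith+
qed

theorem lemma3p4:
  fixes V :: "'a set" and E :: "'a set set" and A B :: "'a set"
  assumes "simple_graph V E"
    and "V = A \<union> B" and "A \<inter> B = {}"
    and "\<forall>v\<in>V. real (card (nbrs_in E B v)) \<le> real (max_degree V E) / 100"
    and "independent_set E A"
  shows "lf_decomposable E (nat \<lceil>real (max_degree V E) / 2\<rceil>)"
proof -
  define d where "d = max_degree V E"
  have "card (nbrs E v \<inter> B) \<le> d div 100" if "v \<in> V" for v
  proof -
    have "real (card (nbrs E v \<inter> B) * 100) \<le> real d"
      using assms(4) that by (simp add: d_def nbrs_in_eq_nbrs_Int)
    then show ?thesis unfolding of_nat_le_iff by (simp add: less_eq_div_iff_mult_less_eq)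
  qed
  moreover have "card (nbrs E v) \<le> 2 * nat \<lceil>real d / 2\<rceil>" if "v \<in> V" for v
    using degree_le_max_degree[of V v E] simple_graph_degree_eq_card_nbrs[OF assms(1)] assms(1) that
      nat_ceiling_half(1)[of d] by (simp add: d_def simple_graph_def)
  moreover have "simple_graph (A \<union> B) E" using assms(1,2) by simp
  ultimately interpret sparse_bipartite A B E "d div 100" "nat \<lceil>real d / 2\<rceil>"
    using assms(2,3,5) nat_ceiling_half(2)[of d]
    by (intro sparse_bipartite.intro independent_part_graph.intro sparse_bipartite_axioms.intro) auto
  show ?thesis using lf_decomposable by (simp add: d_def)
qed

end
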